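(* For each $C>0$ there is an irrational number $x=[a_0,a_1,a_2,\ldots]$ with all $a_i\in\{1,2,3,4\}$ whose sequence of partial quotients is eventually periodic with period length at least $C$, and whose Jacobi sequence is the constant sequence $1,1,1,\ldots$. Furthermore, there are uncountably many irrational numbers $x=[a_0,a_1,a_2,\ldots]$ with all $a_i\in\{1,2,3,4\}$ whose continued fraction expansion is not eventually periodic and whose Jacobi sequence is the constant sequence $1,1,1,\ldots$.
   Context: For $x\in\mathbb{R}\setminus\mathbb{Q}$ with regular continued fraction expansion $x=[a_0,a_1,a_2,\ldots]$, the convergents $s_k/t_k$ are defined by $s_{-1}=1$, $s_0=a_0$, $s_k=a_ks_{k-1}+s_{k-2}$ and $t_{-1}=0$, $t_0=1$, $t_k=a_kt_{k-1}+t_{k-2}$ for $k\ge1$. For an odd natural number $n$ and an integer $m$ coprime to $n$, $\left(\frac{m}{n}\right)$ is the usual Jacobi symbol; if $n$ is even and $\gcd(m,n)=1$, one sets $\left(\frac{m}{n}\right)=*$, a fixed symbol different from $\pm1$. The Jacobi sequence of $x$ is $\left(\frac{s_k}{t_k}\right)$, $k\ge 0$. An irrational number whose partial quotients all lie in $\{1,2,3,4\}$ is called a 4-representative. *)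

theory Defs
  imports "HOL-Analysis.Analysis" "HOL-Number_Theory.Number_Theory" "HOL-Library.Countable_Set"
begin

fun cf_rem :: "real \<Rightarrow> nat \<Rightarrow> real" where
  "cf_rem x 0 = x"
| "cf_rem x (Suc k) = 1 / (cf_rem x k - of_int \<lfloor>cf_rem x k\<rfloor>)"

definition cf :: "real \<Rightarrow> nat \<Rightarrow> int" where
  "cf x k = \<lfloor>cf_rem x k\<rfloor>"

text \<open>Numerators s_k and denominators t_k of the convergents (k \<ge> 0),
  with s_{-1} = 1, s_0 = a_0, t_{-1} = 0, t_0 = 1.\<close>
fun cnum :: "(nat \<Rightarrow> int) \<Rightarrow> nat \<Rightarrow> int" where
  "cnum a 0 = a 0"
| "cnum a (Suc 0) = a 1 * a 0 + 1"
| "cnum a (Suc (Suc k)) = a (Suc (Suc k)) * cnum a (Suc k) + cnum a k"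

fun cden :: "(nat \<Rightarrow> int) \<Rightarrow> nat \<Rightarrow> int" where
  "cden a 0 = 1"
| "cden a (Suc 0) = a 1"
| "cden a (Suc (Suc k)) = a (Suc (Suc k)) * cden a (Suc k) + cden a k"

definition Jacobi :: "int \<Rightarrow> nat \<Rightarrow> int" where
  "Jacobi m n = (\<Prod>p\<in>#prime_factorization n. Legendre m (int p))"

datatype jac_val = JStar | JVal int

definition jacobi_seq :: "real \<Rightarrow> nat \<Rightarrow> jac_val" where
  "jacobi_seq x k =
     (let s = cnum (cf x) k; t = cden (cf x) k in
      if even t then JStar else JVal (Jacobi s (nat t)))"

definition eventually_periodic_with :: "(nat \<Rightarrow> int) \<Rightarrow> nat \<Rightarrow> bool" where
  "eventually_periodic_with a p \<longleftrightarrow> p > 0 \<and> (\<exists>N. \<forall>n\<ge>N. a (n + p) = a n)"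

definition eventually_periodic :: "(nat \<Rightarrow> int) \<Rightarrow> bool" where
  "eventually_periodic a \<longleftrightarrow> (\<exists>p. eventually_periodic_with a p)"

definition period_length :: "(nat \<Rightarrow> int) \<Rightarrow> nat" where
  "period_length a = (LEAST p. eventually_periodic_with a p)"

end

theory Submission
  imports Defs
begin

text \<open>For a bit sequence \<open>b\<close> take the partial quotients \<open>a\<^sub>0 = a\<^sub>1 = 1\<close> and, for \<open>n \<ge> 2\<close>,
  \<open>a\<^sub>n = 2\<close> if \<open>n\<close> is odd and bit \<open>\<lfloor>(n - 3)/4\<rfloor>\<close> of \<open>b\<close> is set, \<open>a\<^sub>n = 4\<close> otherwise.
  Modulo 4 every denominator \<open>t\<^sub>k\<close> is then \<open>1\<close>, except \<open>t\<^sub>4\<^sub>j\<^sub>+\<^sub>3 \<equiv> 3\<close> when bit \<open>j\<close> is set.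
  So the \<open>t\<^sub>k\<close> are odd and never two consecutive ones are \<open>3 (mod 4)\<close>; since
  \<open>t\<^sub>k\<^sub>+\<^sub>2 \<equiv> t\<^sub>k (mod t\<^sub>k\<^sub>+\<^sub>1)\<close>, Jacobi reciprocity propagates \<open>(t\<^sub>k/t\<^sub>k\<^sub>+\<^sub>1) = 1\<close> from
  \<open>t\<^sub>0 = 1\<close>, and \<open>s\<^sub>k t\<^sub>k\<^sub>-\<^sub>1 \<equiv> (-1)\<^sup>k\<^sup>-\<^sup>1 (mod t\<^sub>k)\<close> together with \<open>t\<^sub>k \<equiv> 1 (mod 4)\<close> for even
  \<open>k\<close> gives \<open>(s\<^sub>k/t\<^sub>k) = 1\<close>.

  Bounded partial quotients \<open>\<ge> 1\<close> are the expansion of an irrational number, so every \<open>b\<close> yields an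
  admissible number, injectively in \<open>b\<close>. The bits \<open>b j = (M dvd j)\<close> produce a period of length
  between \<open>4M - 2\<close> and \<open>4M\<close>; and since only countably many sequences are eventually periodic,
  uncountably many \<open>b\<close> produce aperiodic expansions.\<close>

section \<open>Legendre and Jacobi symbols\<close>

lemma Legendre_cong:
  assumes "[a = b] (mod p)"
  shows "Legendre a p = Legendre b p"
proof -
  have "[a = 0] (mod p) \<longleftrightarrow> [b = 0] (mod p)" and "QuadRes p a \<longleftrightarrow> QuadRes p b"
    using assms unfolding QuadRes_def by (meson cong_sym cong_trans)+
  then show ?thesis unfolding Legendre_def by simp
qed

lemma Legendre_values: "Legendre a p \<in> {-1, 0, 1}"
  unfolding Legendre_def by auto

lemma Legendre_one: "prime p \<Longrightarrow> Legendre 1 (int p) = 1"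
  by (auto simp: Legendre_def QuadRes_def cong_def prime_gt_1_nat intro: exI[of _ 1])

lemma cong_sign_imp_eq:
  fixes x y :: int
  assumes "x \<in> {-1, 0, 1}" "y \<in> {-1, 0, 1}" "[x = y] (mod p)" "2 < p"
  shows "x = y"
proof (rule ccontr)
  assume "x \<noteq> y"
  moreover have "p dvd x - y" using assms(3) by (simp add: cong_iff_dvd_diff)
  ultimately have "\<bar>p\<bar> \<le> \<bar>x - y\<bar>" by (simp add: dvd_imp_le_int)
  then show False using assms by auto
qed

lemma odd_prime_gt_2: "prime p \<Longrightarrow> odd p \<Longrightarrow> 2 < (p::nat)"
  using prime_ge_2_nat[of p] by (cases "p = 2") auto

lemma Legendre_mult:
  assumes "prime p" "2 < p"
  shows "Legendre (a * b) (int p) = Legendre a (int p) * Legendre b (int p)"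
proof -
  have "[Legendre (a * b) (int p) = a ^ ((p - 1) div 2) * b ^ ((p - 1) div 2)] (mod int p)"
    using euler_criterion[OF assms, of "a * b"] by (simp add: power_mult_distrib)
  moreover have "[Legendre a (int p) * Legendre b (int p) = a ^ ((p - 1) div 2) * b ^ ((p - 1) div 2)] (mod int p)"
    using euler_criterion[OF assms] cong_mult by blast
  ultimately have "[Legendre (a * b) (int p) = Legendre a (int p) * Legendre b (int p)] (mod int p)"
    by (meson cong_sym cong_trans)
  moreover have "Legendre a (int p) * Legendre b (int p) \<in> {-1, 0, 1}"
    using Legendre_values[of a "int p"] Legendre_values[of b "int p"] by auto
  ultimately show ?thesis using assms(2) by (intro cong_sign_imp_eq[OF Legendre_values]) auto
qed

definition chi4 :: "int \<Rightarrow> int" where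
  "chi4 n = (if n mod 4 = 1 then 1 else -1)"

lemma chi4_mult: "odd a \<Longrightarrow> odd b \<Longrightarrow> chi4 (a * b) = chi4 a * chi4 b"
proof -
  assume "odd a" "odd b"
  then have "a mod 4 = 1 \<or> a mod 4 = 3" "b mod 4 = 1 \<or> b mod 4 = 3" by presburger+
  moreover have "(a * b) mod 4 = ((a mod 4) * (b mod 4)) mod 4" by (simp add: mod_mult_eq)
  ultimately show ?thesis unfolding chi4_def by (elim disjE) simp_all
qed

lemma minus_one_power_half: "odd p \<Longrightarrow> (-1::int) ^ ((p - 1) div 2) = chi4 (int p)"
  unfolding chi4_def minus_one_power_iff by presburger

lemma Legendre_minus_one:
  assumes "prime p" "2 < p"
  shows "Legendre (-1) (int p) = chi4 (int p)"
proof -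
  have "[Legendre (-1) (int p) = chi4 (int p)] (mod int p)"
    using euler_criterion[OF assms, of "-1"] minus_one_power_half[OF prime_odd_nat[OF assms]]
    by simp
  then show ?thesis using assms(2) by (intro cong_sign_imp_eq[OF Legendre_values]) (auto simp: chi4_def)
qed

lemma Jacobi_one_right [simp]: "Jacobi m (Suc 0) = 1"
  by (simp add: Jacobi_def)

lemma Jacobi_one_left [simp]: "Jacobi 1 n = 1"
  unfolding Jacobi_def by (rule prod_mset.neutral) (auto simp: in_prime_factors_iff Legendre_one)

lemma Jacobi_prime: "prime p \<Longrightarrow> Jacobi m p = Legendre m (int p)"
  by (simp add: Jacobi_def prime_factorization_prime)

lemma Jacobi_mult_right: "0 < n1 \<Longrightarrow> 0 < n2 \<Longrightarrow> Jacobi m (n1 * n2) = Jacobi m n1 * Jacobi m n2"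
  by (simp add: Jacobi_def prime_factorization_mult)

lemma Jacobi_mult_left:
  assumes "odd n"
  shows "Jacobi (a * b) n = Jacobi a n * Jacobi b n"
proof -
  have "Legendre (a * b) (int p) = Legendre a (int p) * Legendre b (int p)"
    if "p \<in># prime_factorization n" for p
  proof (rule Legendre_mult)
    show "prime p" using that by (simp add: in_prime_factors_iff)
    moreover have "p dvd n" using that by (simp add: in_prime_factors_iff)
    then have "odd p" using assms by (meson dvd_trans even_two_times_div_two dvd_triv_left)
    ultimately show "2 < p" by (rule odd_prime_gt_2)
  qed
  then show ?thesis
    unfolding Jacobi_def by (simp cong: image_mset_cong add: prod_mset.distrib)
qed

lemma Jacobi_cong:
  assumes "[a = b] (mod int n)"
  shows "Jacobi a n = Jacobi b n"
proof -
  have "Legendre a (int p) = Legendre b (int p)" if "p \<in># prime_factorization n" for p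
  proof (rule Legendre_cong)
    have "int p dvd int n" using that by (simp add: in_prime_factors_iff)
    then show "[a = b] (mod int p)" using assms cong_dvd_modulus by blast
  qed
  then show ?thesis unfolding Jacobi_def by (simp cong: image_mset_cong)
qed

lemma Jacobi_minus_one: "odd n \<Longrightarrow> Jacobi (-1) n = chi4 (int n)"
proof (induction n rule: prime_divisors_induct)
  case (unit n)
  then show ?case by (simp add: chi4_def)
next
  case (factor p n)
  then have "odd p" "odd n" by auto
  then have "0 < n" by presburger
  then have "Jacobi (-1) (p * n) = Legendre (-1) (int p) * chi4 (int n)"
    using factor Jacobi_mult_right Jacobi_prime prime_gt_0_nat by simp
  also have "\<dots> = chi4 (int (p * n))"
    using Legendre_minus_one[OF factor(1) odd_prime_gt_2] chi4_mult \<open>odd p\<close> \<open>odd n\<close> factor(1)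
    by simp
  finally show ?case .
qed simp

definition qr_sign :: "int \<Rightarrow> int \<Rightarrow> int" where
  "qr_sign m n = (if m mod 4 = 3 \<and> n mod 4 = 3 then -1 else 1)"

lemma qr_sign_mult_left: "odd a \<Longrightarrow> odd b \<Longrightarrow> qr_sign (a * b) c = qr_sign a c * qr_sign b c"
proof -
  assume "odd a" "odd b"
  then have "a mod 4 = 1 \<or> a mod 4 = 3" "b mod 4 = 1 \<or> b mod 4 = 3" by presburger+
  moreover have "(a * b) mod 4 = ((a mod 4) * (b mod 4)) mod 4" by (simp add: mod_mult_eq)
  ultimately show ?thesis unfolding qr_sign_def by (elim disjE) simp_all
qed

lemma qr_sign_commute: "qr_sign m n = qr_sign n m"
  unfolding qr_sign_def by auto

lemma Legendre_reciprocity: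
  assumes "prime p" "2 < p" "prime q" "2 < q" "p \<noteq> q"
  shows "Legendre (int p) (int q) * Legendre (int q) (int p) = qr_sign (int p) (int q)"
proof -
  have "odd p" "odd q" using assms prime_odd_nat by auto
  then have "(-1::int) ^ ((p - 1) div 2 * ((q - 1) div 2)) = qr_sign (int p) (int q)"
    unfolding qr_sign_def minus_one_power_iff even_mult_iff by presburger
  then show ?thesis using Quadratic_Reciprocity[OF assms] by simp
qed

lemma Jacobi_reciprocity_prime:
  assumes "prime q" "odd q" "odd m" "coprime m q"
  shows "Jacobi (int m) q * Jacobi (int q) m = qr_sign (int m) (int q)"
  using assms(3,4)
proof (induction m rule: prime_divisors_induct)
  case (unit m)
  then show ?case by (simp add: qr_sign_def)
next
  case (factor p n)
  then have "odd p" "odd n" "coprime p q" "coprime n q" by auto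
  have "p \<noteq> q" using \<open>coprime p q\<close> assms(1) by (metis coprime_self not_prime_unit)
  have "0 < n" using \<open>odd n\<close> by presburger
  have "Jacobi (int (p * n)) q * Jacobi (int q) (p * n)
      = (Legendre (int p) (int q) * Legendre (int q) (int p)) * (Jacobi (int n) q * Jacobi (int q) n)"
    using Jacobi_mult_left[OF assms(2), of "int p" "int n"] Jacobi_mult_right[of p n "int q"]
      Jacobi_prime[OF factor(1)] Jacobi_prime[OF assms(1)] prime_gt_0_nat[OF factor(1)] \<open>0 < n\<close>
    by simp
  also have "\<dots> = qr_sign (int p) (int q) * qr_sign (int n) (int q)"
    using Legendre_reciprocity[OF factor(1) odd_prime_gt_2 assms(1) odd_prime_gt_2 \<open>p \<noteq> q\<close>]
      factor.IH \<open>odd p\<close> \<open>odd n\<close> \<open>coprime n q\<close> assms(1,2) factor(1) by simp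
  also have "\<dots> = qr_sign (int (p * n)) (int q)"
    using qr_sign_mult_left \<open>odd p\<close> \<open>odd n\<close> by simp
  finally show ?case .
qed simp

theorem Jacobi_reciprocity:
  assumes "odd m" "odd n" "coprime m n"
  shows "Jacobi (int m) n * Jacobi (int n) m = qr_sign (int m) (int n)"
  using assms(2,3)
proof (induction n rule: prime_divisors_induct)
  case (unit n)
  then show ?case by (simp add: qr_sign_def)
next
  case (factor q n)
  then have "odd q" "odd n" "coprime m q" "coprime m n" by auto
  have "0 < n" using \<open>odd n\<close> by presburger
  have "Jacobi (int m) (q * n) * Jacobi (int (q * n)) m
      = (Jacobi (int m) q * Jacobi (int q) m) * (Jacobi (int m) n * Jacobi (int n) m)"
    using Jacobi_mult_left[OF assms(1), of "int q" "int n"] Jacobi_mult_right[of q n "int m"]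
      prime_gt_0_nat[OF factor(1)] \<open>0 < n\<close> by simp
  also have "\<dots> = qr_sign (int m) (int q) * qr_sign (int m) (int n)"
    using Jacobi_reciprocity_prime[OF factor(1) \<open>odd q\<close> assms(1) \<open>coprime m q\<close>]
      factor.IH \<open>odd n\<close> \<open>coprime m n\<close> by simp
  also have "\<dots> = qr_sign (int m) (int (q * n))"
    using qr_sign_mult_left[of "int q" "int n"] qr_sign_commute \<open>odd q\<close> \<open>odd n\<close> by simp
  finally show ?case .
qed simp

section \<open>Convergents\<close>

lemma cden_ge_one: "(\<And>i. 1 \<le> a i) \<Longrightarrow> 1 \<le> cden a k"
proof (induction a k rule: cden.induct)
  case (3 a k)
  then have "1 * 1 \<le> a (Suc (Suc k)) * cden a (Suc k)"
    by (intro mult_mono) (auto intro: order.trans[OF zero_le_one])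
  then show ?case using 3 by simp
qed auto

lemma cnum_cden_det: "cnum a (Suc k) * cden a k - cnum a k * cden a (Suc k) = (-1) ^ k"
proof (induction k)
  case (Suc k)
  have "cnum a (Suc (Suc k)) * cden a (Suc k) - cnum a (Suc k) * cden a (Suc (Suc k))
      = - (cnum a (Suc k) * cden a k - cnum a k * cden a (Suc k))"
    by (simp add: algebra_simps)
  then show ?case using Suc by simp
qed simp

lemma coprime_cden_Suc: "coprime (cden a k) (cden a (Suc k))"
proof (rule coprimeI)
  fix c assume "c dvd cden a k" "c dvd cden a (Suc k)"
  then have "c dvd (-1) ^ k" using cnum_cden_det[of a k] by (metis dvd_diff dvd_mult)
  then show "is_unit c" by (rule dvd_unit_imp_unit) simp
qed

lemma cden_Suc_Suc_cong: "[cden a (Suc (Suc k)) = cden a k] (mod cden a (Suc k))"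
  by (simp add: cong_def)

lemma cnum_cden_cong: "[cnum a (Suc k) * cden a k = (-1) ^ k] (mod cden a (Suc k))"
  using cnum_cden_det[of a k] by (simp add: cong_iff_dvd_diff algebra_simps)

locale one_mod_four_denominators =
  fixes a :: "nat \<Rightarrow> int"
  assumes pq_ge_one: "\<And>i. 1 \<le> a i"
    and odd_cden: "\<And>k. odd (cden a k)"
    and cden_even_mod4: "\<And>k. even k \<Longrightarrow> cden a k mod 4 = 1"
begin

lemma int_nat_cden [simp]: "int (nat (cden a k)) = cden a k"
  using cden_ge_one[of a k, OF pq_ge_one] by simp

lemma odd_nat_cden: "odd (nat (cden a k))"
  using odd_cden[of k] cden_ge_one[of a k, OF pq_ge_one] by (simp add: even_nat_iff)

lemma Jacobi_cden_cden_Suc: "Jacobi (cden a k) (nat (cden a (Suc k))) = 1"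
proof (induction k)
  case (Suc k)
  define m where "m = nat (cden a (Suc k))"
  define n where "n = nat (cden a (Suc (Suc k)))"
  have "coprime m n"
    using coprime_cden_Suc[of a "Suc k"] unfolding m_def n_def
    by (metis coprime_int_iff int_nat_cden)
  then have reciprocity: "Jacobi (int m) n * Jacobi (int n) m = qr_sign (int m) (int n)"
    unfolding m_def n_def by (intro Jacobi_reciprocity odd_nat_cden)
  have "cden a (Suc k) mod 4 = 1 \<or> cden a (Suc (Suc k)) mod 4 = 1"
    using cden_even_mod4[of "Suc k"] cden_even_mod4[of "Suc (Suc k)"] by (metis even_Suc)
  then have sign: "qr_sign (int m) (int n) = 1"
    unfolding qr_sign_def m_def n_def by auto
  have "Jacobi (int n) m = Jacobi (cden a k) m"
    using cden_Suc_Suc_cong[of a k] unfolding m_def n_def int_nat_cden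
    by (intro Jacobi_cong) (simp only: int_nat_cden)
  then have "Jacobi (int n) m = 1" using Suc.IH unfolding m_def by simp
  then have "Jacobi (int m) n = 1" using reciprocity sign by simp
  then show ?case unfolding m_def n_def int_nat_cden .
qed simp

lemma Jacobi_cnum_cden: "Jacobi (cnum a k) (nat (cden a k)) = 1"
proof (cases k)
  case (Suc j)
  define n where "n = nat (cden a (Suc j))"
  have "odd n" unfolding n_def by (rule odd_nat_cden)
  have "Jacobi (cnum a (Suc j)) n = Jacobi (cnum a (Suc j) * cden a j) n"
    using Jacobi_mult_left[OF \<open>odd n\<close>] Jacobi_cden_cden_Suc[of j] unfolding n_def by simp
  also have "\<dots> = Jacobi ((-1) ^ j) n"
    using cnum_cden_cong[of a j] unfolding n_def by (intro Jacobi_cong) (simp only: int_nat_cden)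
  also have "\<dots> = 1"
  proof (cases "even j")
    case False
    have "Jacobi (-1) n = chi4 (cden a (Suc j))"
      using Jacobi_minus_one[OF \<open>odd n\<close>] unfolding n_def int_nat_cden .
    moreover have "cden a (Suc j) mod 4 = 1" using False by (intro cden_even_mod4) simp
    ultimately show ?thesis using False by (simp add: chi4_def)
  qed simp
  finally show ?thesis using Suc n_def by simp
qed simp

lemma jacobi_seq_eq_one: "cf x = a \<Longrightarrow> jacobi_seq x k = JVal 1"
  using odd_cden[of k] Jacobi_cnum_cden[of k] by (simp add: jacobi_seq_def)

end

section \<open>Continued fractions with bounded partial quotients\<close>

fun cf_segment :: "(nat \<Rightarrow> int) \<Rightarrow> nat \<Rightarrow> nat \<Rightarrow> real" where
  "cf_segment a n 0 = a n"
| "cf_segment a n (Suc m) = a n + 1 / cf_segment a (Suc n) m"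

definition cf_value :: "(nat \<Rightarrow> int) \<Rightarrow> nat \<Rightarrow> real" where
  "cf_value a n = lim (cf_segment a n)"

locale bounded_partial_quotients =
  fixes a :: "nat \<Rightarrow> int" and B :: int
  assumes pq_ge_one: "\<And>i. 1 \<le> a i" and pq_le_bound: "\<And>i. a i \<le> B"
begin

lemma cf_segment_bounds: "1 \<le> cf_segment a n m \<and> cf_segment a n m \<le> B + 1"
proof (induction m arbitrary: n)
  case 0
  then show ?case using pq_ge_one[of n] pq_le_bound[of n] by simp
next
  case (Suc m)
  then have "0 < 1 / cf_segment a (Suc n) m" "1 / cf_segment a (Suc n) m \<le> 1"
    by (auto simp: less_le_trans[OF zero_less_one])
  moreover have "1 \<le> real_of_int (a n)" "real_of_int (a n) \<le> B"
    using pq_ge_one[of n] pq_le_bound[of n] by simp_all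
  ultimately show ?case unfolding cf_segment.simps by (intro conjI; linarith)
qed

lemma cf_segment_Suc_ge: "(B + 2) / (B + 1) \<le> cf_segment a n (Suc m)"
proof -
  have "1 / (B + 1) \<le> 1 / cf_segment a (Suc n) m"
    using cf_segment_bounds[of "Suc n" m] by (intro divide_left_mono) auto
  moreover have "(B + 2) / (B + 1) = 1 + 1 / (B + 1)"
    using cf_segment_bounds[of n m] by (simp add: field_simps)
  ultimately show ?thesis using pq_ge_one[of n] by simp
qed

text \<open>The map \<open>y \<mapsto> a\<^sub>n + 1/y\<close> contracts by the factor \<open>(B + 1)/(B + 2)\<close> on the range of the
  segments of positive length.\<close>
lemma cf_segment_step:
  "\<bar>cf_segment a n (Suc m) - cf_segment a n m\<bar> \<le> ((B + 1) / (B + 2)) ^ m"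
proof (induction m arbitrary: n)
  case 0
  then show ?case using cf_segment_bounds[of "Suc n" 0] by simp
next
  case (Suc m)
  define u where "u = cf_segment a (Suc n) (Suc m)"
  define v where "v = cf_segment a (Suc n) m"
  have "B \<ge> 1" using pq_ge_one[of 0] pq_le_bound[of 0] by simp
  have u: "(B + 2) / (B + 1) \<le> u" unfolding u_def by (rule cf_segment_Suc_ge)
  have v: "1 \<le> v" unfolding v_def using cf_segment_bounds by blast
  have "0 < real_of_int (B + 2) / real_of_int (B + 1)" using \<open>B \<ge> 1\<close> by simp
  with u have "0 < u" by linarith
  have "(B + 2) / (B + 1) \<le> u * v" using mult_mono[OF u v] \<open>0 < u\<close> by simp
  have "cf_segment a n (Suc (Suc m)) - cf_segment a n (Suc m) = 1 / u - 1 / v"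
    unfolding u_def v_def by simp
  also have "\<dots> = (v - u) / (u * v)" using \<open>0 < u\<close> v by (simp add: field_simps)
  finally have "\<bar>cf_segment a n (Suc (Suc m)) - cf_segment a n (Suc m)\<bar> = \<bar>u - v\<bar> / (u * v)"
    using \<open>0 < u\<close> v by (simp add: abs_minus_commute)
  also have "\<dots> \<le> \<bar>u - v\<bar> / ((B + 2) / (B + 1))"
    using \<open>(B + 2) / (B + 1) \<le> u * v\<close> \<open>0 < u\<close> v \<open>B \<ge> 1\<close>
    by (intro divide_left_mono) auto
  also have "\<dots> = \<bar>u - v\<bar> * ((B + 1) / (B + 2))" by simp
  also have "\<dots> \<le> ((B + 1) / (B + 2)) ^ m * ((B + 1) / (B + 2))"
    using Suc.IH[of "Suc n", folded u_def v_def] \<open>B \<ge> 1\<close> by (intro mult_right_mono) simp_all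
  finally show ?case by (simp only: power_Suc2)
qed

lemma convergent_cf_segment: "convergent (cf_segment a n)"
proof -
  have "B \<ge> 1" using pq_ge_one[of 0] pq_le_bound[of 0] by simp
  define d where "d m = cf_segment a n (Suc m) - cf_segment a n m" for m
  have "summable d"
  proof (rule summable_comparison_test)
    show "\<exists>N. \<forall>m\<ge>N. norm (d m) \<le> ((B + 1) / (B + 2)) ^ m"
      unfolding d_def using cf_segment_step by auto
    show "summable (\<lambda>m. ((B + 1) / (B + 2) :: real) ^ m)"
      using \<open>B \<ge> 1\<close> by (intro summable_geometric) simp
  qed
  then have "(\<lambda>m. cf_segment a n 0 + (\<Sum>i<m. d i)) \<longlonglongrightarrow> cf_segment a n 0 + suminf d"
    by (intro tendsto_add tendsto_const summable_LIMSEQ)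
  moreover have "(\<lambda>m. cf_segment a n 0 + (\<Sum>i<m. d i)) = cf_segment a n"
    unfolding d_def sum_lessThan_telescope by simp
  ultimately show ?thesis unfolding convergent_def by auto
qed

lemma cf_segment_tendsto: "cf_segment a n \<longlonglongrightarrow> cf_value a n"
  unfolding cf_value_def using convergent_cf_segment by (simp add: convergent_LIMSEQ_iff)

lemma cf_value_ge_one: "1 \<le> cf_value a n"
  by (rule LIMSEQ_le_const[OF cf_segment_tendsto]) (use cf_segment_bounds in auto)

lemma cf_value_rec: "cf_value a n = a n + 1 / cf_value a (Suc n)"
proof (rule LIMSEQ_unique)
  show "(\<lambda>m. cf_segment a n (Suc m)) \<longlonglongrightarrow> cf_value a n"
    using LIMSEQ_Suc[OF cf_segment_tendsto] .
  show "(\<lambda>m. cf_segment a n (Suc m)) \<longlonglongrightarrow> a n + 1 / cf_value a (Suc n)"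
    using cf_value_ge_one[of "Suc n"] by (auto intro!: tendsto_intros cf_segment_tendsto)
qed

lemma cf_value_Suc_gt_one: "1 < cf_value a (Suc n)"
proof -
  have "0 < cf_value a (Suc (Suc n))" using cf_value_ge_one[of "Suc (Suc n)"] by linarith
  then have "0 < 1 / cf_value a (Suc (Suc n))" by simp
  then show ?thesis using cf_value_rec[of "Suc n"] pq_ge_one[of "Suc n"] by linarith
qed

lemma floor_cf_value: "\<lfloor>cf_value a n\<rfloor> = a n"
  using cf_value_rec[of n] cf_value_Suc_gt_one[of n] by (simp add: floor_eq_iff)

lemma cf_rem_cf_value: "cf_rem (cf_value a 0) k = cf_value a k"
proof (induction k)
  case (Suc k)
  then show ?case using cf_value_rec[of k] floor_cf_value[of k] cf_value_Suc_gt_one[of k] by simp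
qed simp

lemma cf_cf_value: "cf (cf_value a 0) = a"
  using cf_rem_cf_value floor_cf_value by (simp add: cf_def fun_eq_iff)

end

lemma cf_rem_Suc_shift: "cf_rem x (Suc k) = cf_rem (cf_rem x 1) k"
  by (induction k) simp_all

lemma cf_Suc_shift: "cf x (Suc k) = cf (cf_rem x 1) k"
  unfolding cf_def cf_rem_Suc_shift ..

text \<open>The continued fraction algorithm runs through the Euclidean algorithm on a rational number,
  whose remainder eventually vanishes; after that, \<open>1 / 0 = 0\<close> yields a partial quotient \<open>0\<close>.\<close>
lemma rational_cf_lt_one:
  assumes "0 < q" "x = of_int p / of_nat q"
  shows "\<exists>i. cf x i < 1"
  using assms
proof (induction q arbitrary: x p rule: less_induct)
  case (less q)
  have floor_x: "\<lfloor>x\<rfloor> = p div int q"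
    using less.prems(2) floor_divide_of_int_eq[of p "int q"] by simp
  have "(of_int p :: real) = of_nat q * of_int (p div int q) + of_int (p mod int q)"
    by (metis of_int_add of_int_mult of_int_of_nat_eq div_mult_mod_eq mult.commute)
  then have frac: "x - of_int \<lfloor>x\<rfloor> = of_int (p mod int q) / of_nat q"
    unfolding floor_x using less.prems by (simp add: field_simps)
  show ?case
  proof (cases "p mod int q = 0")
    case True
    then have "cf x 1 = 0" using frac by (simp add: cf_def)
    then show ?thesis by (metis zero_less_one)
  next
    case False
    define r where "r = nat (p mod int q)"
    have "int r = p mod int q" unfolding r_def using less.prems(1) by simp
    have "0 < r" "r < q"
      using False less.prems(1) pos_mod_sign[of "int q" p] pos_mod_bound[of "int q" p]
      unfolding r_def by linarith+
    moreover have "cf_rem x 1 = of_int (int q) / of_nat r" using frac \<open>int r = p mod int q\<close> by simp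
    ultimately obtain i where "cf (cf_rem x 1) i < 1" using less.IH by blast
    then show ?thesis using cf_Suc_shift by metis
  qed
qed

lemma irrational_if_cf_ge_one:
  assumes "\<And>i. 1 \<le> cf x i"
  shows "x \<notin> \<rat>"
proof
  assume "x \<in> \<rat>"
  then obtain p q where "0 < q" "x = of_int p / of_int q" by (metis Rats_cases')
  then have "0 < nat q" "x = of_int p / of_nat (nat q)" by simp_all
  then show False using rational_cf_lt_one assms by (meson not_less)
qed

section \<open>Encoding bit sequences\<close>

text \<open>Bit \<open>b j\<close> lowers both \<open>a\<^sub>4\<^sub>j\<^sub>+\<^sub>3\<close> and \<open>a\<^sub>4\<^sub>j\<^sub>+\<^sub>5\<close> from \<open>4\<close> to \<open>2\<close>: the first change makes
  \<open>t\<^sub>4\<^sub>j\<^sub>+\<^sub>3 \<equiv> 3 (mod 4)\<close>, the second restores \<open>t\<^sub>4\<^sub>j\<^sub>+\<^sub>5 \<equiv> 1 (mod 4)\<close>.\<close>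
definition code_cf :: "(nat \<Rightarrow> bool) \<Rightarrow> nat \<Rightarrow> int" where
  "code_cf b n = (if n \<le> 1 then 1 else if odd n \<and> b ((n - 3) div 4) then 2 else 4)"

lemma code_cf_range: "code_cf b n \<in> {1, 2, 3, 4}"
  by (simp add: code_cf_def)

lemma code_cf_residue_step:
  fixes b :: "nat \<Rightarrow> bool" and r :: "nat \<Rightarrow> int"
  defines "r k \<equiv> if k mod 4 = 3 \<and> b ((k - 3) div 4) then 3 else 1"
  shows "(code_cf b (Suc (Suc j)) * r (Suc j) + r j) mod 4 = r (Suc (Suc j))"
proof -
  define i where "i = j div 4"
  have "j = 4 * i \<or> j = 4 * i + 1 \<or> j = 4 * i + 2 \<or> j = 4 * i + 3"
    unfolding i_def by presburger
  then show ?thesis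
  proof (elim disjE)
    assume "j = 4 * i"
    then have "Suc (Suc j) mod 4 = 2" "Suc j mod 4 = 1" "j mod 4 = 0" "even (Suc (Suc j))"
      by presburger+
    then show ?thesis by (simp add: r_def code_cf_def)
  next
    assume "j = 4 * i + 1"
    then have "Suc (Suc j) mod 4 = 3" "Suc j mod 4 = 2" "j mod 4 = 1" "odd (Suc (Suc j))"
      "(Suc (Suc j) - 3) div 4 = i"
      by presburger+
    then show ?thesis by (simp add: r_def code_cf_def)
  next
    assume "j = 4 * i + 2"
    then have "Suc (Suc j) mod 4 = 0" "Suc j mod 4 = 3" "j mod 4 = 2" "even (Suc (Suc j))"
      by presburger+
    then show ?thesis by (simp add: r_def code_cf_def)
  next
    assume "j = 4 * i + 3"
    then have "Suc (Suc j) mod 4 = 1" "Suc j mod 4 = 0" "j mod 4 = 3" "odd (Suc (Suc j))"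
      "(Suc (Suc j) - 3) div 4 = i" "(j - 3) div 4 = i"
      by presburger+
    then show ?thesis by (simp add: r_def code_cf_def)
  qed
qed

lemma cden_code_cf_mod4:
  "cden (code_cf b) k mod 4 = (if k mod 4 = 3 \<and> b ((k - 3) div 4) then 3 else 1)"
proof (induction k rule: less_induct)
  case (less k)
  consider "k = 0" | "k = 1" | j where "k = Suc (Suc j)"
    by (metis One_nat_def not0_implies_Suc)
  then show ?case
  proof cases
    case 3
    then have "cden (code_cf b) k mod 4
        = (code_cf b k * (cden (code_cf b) (Suc j) mod 4) + cden (code_cf b) j mod 4) mod 4"
      by (simp add: mod_add_right_eq) (metis mod_add_left_eq mod_mult_right_eq)
    then show ?thesis using less.IH[of "Suc j"] less.IH[of j] code_cf_residue_step 3 by simp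
  qed (simp_all add: code_cf_def)
qed

lemma one_mod_four_denominators_code_cf: "one_mod_four_denominators (code_cf b)"
proof
  show "1 \<le> code_cf b i" for i by (simp add: code_cf_def)
  show "odd (cden (code_cf b) k)" for k
  proof -
    have "cden (code_cf b) k mod 4 = 1 \<or> cden (code_cf b) k mod 4 = 3"
      using cden_code_cf_mod4[of b k] by simp
    then show ?thesis by presburger
  qed
  show "cden (code_cf b) k mod 4 = 1" if "even k" for k
  proof -
    have "k mod 4 \<noteq> 3" using that by presburger
    then show ?thesis by (simp add: cden_code_cf_mod4)
  qed
qed

definition code_real :: "(nat \<Rightarrow> bool) \<Rightarrow> real" where
  "code_real b = cf_value (code_cf b) 0"

lemma cf_code_real: "cf (code_real b) = code_cf b"
  unfolding code_real_def
  by (rule bounded_partial_quotients.cf_cf_value[where B = 4]) (unfold_locales; simp add: code_cf_def)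

lemma code_real_irrational: "code_real b \<notin> \<rat>"
  by (rule irrational_if_cf_ge_one) (simp add: cf_code_real code_cf_def)

lemma jacobi_seq_code_real: "jacobi_seq (code_real b) k = JVal 1"
  by (rule one_mod_four_denominators.jacobi_seq_eq_one[OF one_mod_four_denominators_code_cf cf_code_real])

lemma inj_code_cf: "inj code_cf"
proof (rule injI)
  fix b b' :: "nat \<Rightarrow> bool" assume eq: "code_cf b = code_cf b'"
  show "b = b'"
  proof
    fix j
    have "(4 * j + 3 - 3) div 4 = j" "odd (4 * j + 3)" "\<not> 4 * j + 3 \<le> (1::nat)" by presburger+
    then show "b j = b' j" using fun_cong[OF eq, of "4 * j + 3"] by (auto simp: code_cf_def split: if_splits)
  qed
qed

section \<open>Periodicity\<close>

lemma eventually_periodic_reduce: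
  fixes f :: "nat \<Rightarrow> 'a" and n :: nat
  assumes "0 < p" "\<forall>n\<ge>N. f (n + p) = f n"
  shows "f n = f (if n < N then n else N + (n - N) mod p)"
proof (induction n rule: less_induct)
  case (less n)
  show ?case
  proof (cases "n < N + p")
    case False
    then have "f n = f (n - p)" using assms(2)[rule_format, of "n - p"] by simp
    also have "\<dots> = f (if n - p < N then n - p else N + (n - p - N) mod p)"
      using less.IH[of "n - p"] assms(1) False by simp
    also have "\<dots> = f (N + (n - N) mod p)"
    proof -
      have "n - N = (n - p - N) + p" using False by simp
      then have "(n - p - N) mod p = (n - N) mod p" by (metis mod_add_self2)
      moreover have "\<not> n - p < N" using False by simp
      ultimately show ?thesis by simp
    qed
    finally show ?thesis using False by simp
  qed auto
qed

text \<open>An eventually periodic sequence is determined by a preperiod, a period and a finite list of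
  initial values.\<close>
lemma countable_eventually_periodic: "countable {f. eventually_periodic f}"
proof (rule countable_subset)
  define G where "G = (\<lambda>(N, p, xs :: int list) n. xs ! (if n < N then n else N + (n - N) mod p))"
  show "{f. eventually_periodic f} \<subseteq> range G"
  proof
    fix f assume "f \<in> {f. eventually_periodic f}"
    then obtain p N where "0 < p" and per: "\<forall>n\<ge>N. f (n + p) = f n"
      unfolding eventually_periodic_def eventually_periodic_with_def by auto
    have "f n = G (N, p, map f [0..<N + p]) n" for n
    proof -
      have "(if n < N then n else N + (n - N) mod p) < N + p" using \<open>0 < p\<close> by auto
      then show ?thesis unfolding G_def using eventually_periodic_reduce[OF \<open>0 < p\<close> per, of n] by simp
    qed
    then show "f \<in> range G" by blast
  qed
qed simp

lemma uncountable_UNIV_nat_bool: "uncountable (UNIV :: (nat \<Rightarrow> bool) set)"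
proof
  assume "countable (UNIV :: (nat \<Rightarrow> bool) set)"
  then have "\<exists>f :: nat \<Rightarrow> nat \<Rightarrow> bool. range f = UNIV"
    using uncountable_def[of "UNIV :: (nat \<Rightarrow> bool) set"] by simp
  then obtain f :: "nat \<Rightarrow> nat \<Rightarrow> bool" where "range f = UNIV" ..
  then obtain k where "(\<lambda>n. \<not> f n n) = f k" by (metis UNIV_I imageE)
  from fun_cong[OF this, of k] show False by simp
qed

lemma eventually_periodic_with_code_cf:
  assumes "0 < M" "\<And>j. b (j + M) = b j"
  shows "eventually_periodic_with (code_cf b) (4 * M)"
  unfolding eventually_periodic_with_def
proof (intro conjI exI[of _ 2] allI impI)
  fix n :: nat assume "2 \<le> n"
  have "odd (n + 4 * M) \<longleftrightarrow> odd n" by simp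
  moreover have "(n + 4 * M - 3) div 4 = (n - 3) div 4 + M" if "odd n"
  proof -
    have "3 \<le> n" using that \<open>2 \<le> n\<close> by (cases "n = 2") auto
    then have "n + 4 * M - 3 = (n - 3) + M * 4" by simp
    then show ?thesis by simp
  qed
  ultimately show "code_cf b (n + 4 * M) = code_cf b n"
    using \<open>2 \<le> n\<close> assms(2) unfolding code_cf_def by (cases "odd n") simp_all
qed (use assms(1) in simp)

lemma period_code_cf_dvd_ge:
  assumes "0 < M" "eventually_periodic_with (code_cf (\<lambda>j. M dvd j)) p"
  shows "4 * M - 2 \<le> p"
proof -
  let ?b = "\<lambda>j. M dvd j"
  obtain N where "0 < p" and per: "\<forall>n\<ge>N. code_cf ?b (n + p) = code_cf ?b n"
    using assms(2) unfolding eventually_periodic_with_def by auto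
  define j where "j = M * N"
  have "M dvd j" "N \<le> j" using assms(1) unfolding j_def by simp_all
  define n where "n = 4 * j + 5"
  have "(n - 3) div 4 = j" "odd n" "\<not> n \<le> 1" "N \<le> n"
    using \<open>N \<le> j\<close> unfolding n_def by presburger+
  then have "code_cf ?b (n + p) = 2"
    using per[rule_format, of n] \<open>M dvd j\<close> by (simp add: code_cf_def)
  then have "odd (n + p)" and M_dvd: "M dvd (n + p - 3) div 4"
    by (auto simp: code_cf_def split: if_splits)
  then obtain r where "p = 2 * r" using \<open>odd n\<close> by (metis evenE odd_add)
  define d where "d = (r + 1) div 2"
  have "(n + p - 3) div 4 = j + d" unfolding n_def d_def \<open>p = 2 * r\<close> by presburger
  then have "M dvd d" using M_dvd \<open>M dvd j\<close> by (simp add: dvd_add_right_iff)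
  moreover have "0 < d" unfolding d_def using \<open>0 < p\<close> \<open>p = 2 * r\<close> by simp
  ultimately have "M \<le> d" by (simp add: dvd_imp_le)
  then show ?thesis unfolding d_def \<open>p = 2 * r\<close> by presburger
qed

lemma inj_code_real: "inj code_real"
  using inj_code_cf cf_code_real by (metis injD injI)

lemma exists_jacobi_one_long_period:
  "\<exists>x::real. x \<notin> \<rat> \<and> (\<forall>i. cf x i \<in> {1,2,3,4}) \<and>
     eventually_periodic (cf x) \<and> real (period_length (cf x)) \<ge> C \<and>
     (\<forall>k. jacobi_seq x k = JVal 1)"
proof -
  define M where "M = nat \<lceil>C\<rceil> + 1"
  define x where "x = code_real (\<lambda>j. M dvd j)"
  have "0 < M" unfolding M_def by simp
  have per: "eventually_periodic_with (cf x) (4 * M)"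
    unfolding x_def cf_code_real using \<open>0 < M\<close> by (intro eventually_periodic_with_code_cf) simp_all
  then have "eventually_periodic_with (cf x) (period_length (cf x))"
    unfolding period_length_def by (rule LeastI)
  then have "4 * M - 2 \<le> period_length (cf x)"
    unfolding x_def cf_code_real by (rule period_code_cf_dvd_ge[OF \<open>0 < M\<close>])
  moreover have "C \<le> real (4 * M - 2)"
    using real_nat_ceiling_ge[of C] unfolding M_def by simp
  ultimately have "C \<le> real (period_length (cf x))" by (meson order_trans of_nat_le_iff)
  moreover have "eventually_periodic (cf x)" using per unfolding eventually_periodic_def by blast
  moreover have "x \<notin> \<rat>" "\<forall>i. cf x i \<in> {1,2,3,4}" "\<forall>k. jacobi_seq x k = JVal 1"
    using code_real_irrational jacobi_seq_code_real code_cf_range unfolding x_def cf_code_real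
    by simp_all
  ultimately show ?thesis by blast
qed

lemma uncountable_jacobi_one_aperiodic:
  "uncountable {x::real. x \<notin> \<rat> \<and> (\<forall>i. cf x i \<in> {1,2,3,4}) \<and>
     \<not> eventually_periodic (cf x) \<and> (\<forall>k. jacobi_seq x k = JVal 1)}" (is "uncountable ?S")
proof
  assume "countable ?S"
  define P where "P = {b. eventually_periodic (code_cf b)}"
  have "countable P"
  proof (rule countable_image_inj_on)
    show "countable (code_cf ` P)"
      unfolding P_def by (rule countable_subset[OF _ countable_eventually_periodic]) auto
  qed (rule inj_on_subset[OF inj_code_cf], simp)
  then have "uncountable (UNIV - P)"
    by (rule uncountable_minus_countable[OF uncountable_UNIV_nat_bool])
  have "code_real ` (UNIV - P) \<subseteq> ?S"
    using code_real_irrational jacobi_seq_code_real code_cf_range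
    by (simp add: P_def cf_code_real image_subset_iff)
  then have "countable (code_real ` (UNIV - P))" using \<open>countable ?S\<close> by (rule countable_subset)
  then have "countable (UNIV - P)"
    using inj_on_subset[OF inj_code_real subset_UNIV] by (rule countable_image_inj_on)
  with \<open>uncountable (UNIV - P)\<close> show False by simp
qed

theorem theorem3:
  fixes C :: real
  assumes "C > 0"
  shows "(\<exists>x::real. x \<notin> \<rat> \<and> (\<forall>i. cf x i \<in> {1,2,3,4}) \<and>
            eventually_periodic (cf x) \<and> real (period_length (cf x)) \<ge> C \<and>
            (\<forall>k. jacobi_seq x k = JVal 1))
       \<and> uncountable {x::real. x \<notin> \<rat> \<and> (\<forall>i. cf x i \<in> {1,2,3,4}) \<and>
            \<not> eventually_periodic (cf x) \<and> (\<forall>k. jacobi_seq x k = JVal 1)}"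
  using exists_jacobi_one_long_period uncountable_jacobi_one_aperiodic by blast

end
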